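(* Let $Q\in\mathcal{H}[1,1]$ and let $\alpha,\beta$ be non-negative real numbers with $\beta\neq 0$ such that $|Q(z)-1|<\dfrac{1}{\beta e+\alpha}$ for $z\in\mathbb{D}$. Suppose $p$ is analytic in $\mathbb{D}$ with $p(0)=1$. Then $$p(z)Q(z)+\frac{zp'(z)}{\beta p(z)+\alpha}\prec e^z\quad\Longrightarrow\quad p(z)\prec e^z.$$
   Context: $\mathbb{D}$ is the open unit disk. $\mathcal{H}[1,1]$ is the class of functions analytic in $\mathbb{D}$ of the form $1+a_1z+\cdots$. $f\prec F$ means $f=F\circ\omega$ for some analytic $\omega:\mathbb{D}\to\mathbb{D}$ with $\omega(0)=0$. *)

theory Defs
  imports "HOL-Complex_Analysis.Complex_Analysis"
begin

definition unit_disk :: "complex set" where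
  "unit_disk = ball 0 1"

definition subordinate :: "(complex \<Rightarrow> complex) \<Rightarrow> (complex \<Rightarrow> complex) \<Rightarrow> bool" where
  "subordinate f F \<longleftrightarrow> (\<exists>w. w holomorphic_on unit_disk \<and> w ` unit_disk \<subseteq> unit_disk
      \<and> w 0 = 0 \<and> (\<forall>z\<in>unit_disk. f z = F (w z)))"

definition H11 :: "(complex \<Rightarrow> complex) set" where
  "H11 = {Q. Q holomorphic_on unit_disk \<and> Q 0 = 1}"

end

theory Submission
  imports Defs
begin

text \<open>Since p 0 = exp 0 and exp is injective on the unit disk D, p is subordinate to exp as soon as
  p(D) \<subseteq> exp(D), with Schwarz function Ln \<circ> p. If this fails, let z0 be a point of least modulus
  with p z0 \<notin> exp(D); then p z0 = exp w0 with |w0| = 1, and Jack's lemma for Ln \<circ> p on the disk of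
  radius |z0| gives z0 p'(z0) = m w0 p(z0) with m \<ge> 1. The subordinate expression then takes at z0
  the value exp w0 (Q z0 + m w0 / (\<beta> exp w0 + \<alpha>)). But exp(D) is convex, so it lies in the
  half-plane Re (cnj w0 (\<zeta> / exp w0 - 1)) \<le> 0, while
  Re (1 / (\<beta> exp w0 + \<alpha>)) \<ge> 1 / (\<beta> e + \<alpha>) > |Q z0 - 1| puts that value strictly outside it.\<close>

lemma cos_ge_one_minus_sq_half: "1 - y\<^sup>2 / 2 \<le> cos (y::real)"
proof -
  have "cos y = 1 - 2 * (sin (y/2))\<^sup>2" using cos_double_sin[of "y/2"] by simp
  moreover have "(sin (y/2))\<^sup>2 \<le> (y/2)\<^sup>2"
    using abs_sin_x_le_abs_x[of "y/2"] by (metis abs_ge_zero power2_abs power_mono)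
  ultimately show ?thesis by (simp add: power_divide)
qed

lemma exp_minus_one_le_half_one_plus_sq:
  fixes x :: real
  assumes "x \<le> 1"
  shows "exp (x - 1) \<le> (1 + x\<^sup>2) / 2"
proof -
  define h where "h t = (1 - t + t\<^sup>2 / 2) - exp (- t)" for t :: real
  have "h 0 \<le> h (1 - x)"
  proof (rule DERIV_nonneg_imp_nondecreasing[of 0 "1 - x" h])
    show "0 \<le> 1 - x" using assms by simp
    fix t :: real
    have "DERIV h t :> exp (- t) - (1 - t)"
      unfolding h_def by (auto intro!: derivative_eq_intros simp: power2_eq_square)
    moreover have "0 \<le> exp (- t) - (1 - t)" using exp_ge_add_one_self[of "- t"] by simp
    ultimately show "\<exists>y. DERIV h t :> y \<and> 0 \<le> y" by blast
  qed
  then show ?thesis unfolding h_def by (simp add: power2_eq_square field_simps)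
qed

lemma exp_Re_le_e_mult_cos_Im:
  fixes w :: complex
  assumes "norm w = 1"
  shows "exp (Re w) \<le> exp 1 * cos (Im w)"
proof -
  have "(Re w)\<^sup>2 + (Im w)\<^sup>2 = 1" using assms by (metis cmod_power2 one_power2)
  moreover have "Re w \<le> 1" using complex_Re_le_cmod[of w] assms by simp
  ultimately have "exp (Re w - 1) \<le> cos (Im w)"
    using exp_minus_one_le_half_one_plus_sq cos_ge_one_minus_sq_half[of "Im w"] by fastforce
  then show ?thesis by (simp add: exp_diff field_simps)
qed

lemma Re_inverse_exp_on_circle_ge:
  fixes w :: complex and \<alpha> \<beta> :: real
  assumes w: "norm w = 1" and \<alpha>: "\<alpha> \<ge> 0" and \<beta>: "\<beta> > 0"
  shows "1 / (\<beta> * exp 1 + \<alpha>) \<le> Re (inverse (of_real \<beta> * exp w + of_real \<alpha>))"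
proof -
  define E C S where "E = exp (Re w)" and "C = cos (Im w)" and "S = sin (Im w)"
  define K where "K = \<beta> * exp 1 + \<alpha>"
  define c where "c = of_real \<beta> * exp w + of_real \<alpha>"
  have Rec: "Re c = \<beta> * E * C + \<alpha>" and Imc: "Im c = \<beta> * E * S"
    unfolding c_def E_def C_def S_def by (simp_all add: Re_exp Im_exp)
  have EC: "E \<le> exp 1 * C" unfolding E_def C_def by (rule exp_Re_le_e_mult_cos_Im[OF w])
  have E: "0 < E" "E \<le> exp 1" using complex_Re_le_cmod[of w] w unfolding E_def by simp_all
  have C: "0 < C" "C \<le> 1"
    using EC E(1) unfolding C_def by (auto simp: zero_less_mult_iff dest: order.strict_trans2)
  have "(norm c)\<^sup>2 = \<beta>\<^sup>2 * E\<^sup>2 * (C\<^sup>2 + S\<^sup>2) + 2 * \<alpha> * \<beta> * E * C + \<alpha>\<^sup>2"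
    unfolding cmod_power2 Rec Imc by (simp add: power2_eq_square algebra_simps)
  also have "C\<^sup>2 + S\<^sup>2 = 1" unfolding C_def S_def by simp
  finally have "K * Re c - (norm c)\<^sup>2 = \<beta>\<^sup>2 * E * (exp 1 * C - E) + \<alpha> * \<beta> * (exp 1 - E * C)"
    unfolding K_def Rec by (simp add: power2_eq_square algebra_simps)
  moreover have "0 \<le> \<beta>\<^sup>2 * E * (exp 1 * C - E)" using EC E by simp
  moreover have "E * C \<le> exp 1" using mult_left_le[OF C(2), of E] E by linarith
  then have "0 \<le> \<alpha> * \<beta> * (exp 1 - E * C)" using \<alpha> \<beta> by simp
  ultimately have "(norm c)\<^sup>2 \<le> K * Re c" by linarith
  moreover have "0 < Re c" "0 < K" unfolding Rec K_def using \<alpha> \<beta> E C by (simp_all add: add_pos_nonneg)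
  moreover from \<open>0 < Re c\<close> have "0 < (norm c)\<^sup>2" by auto
  ultimately have "1 / K \<le> Re c / (norm c)\<^sup>2" by (simp add: field_simps)
  also have "Re c / (norm c)\<^sup>2 = Re (inverse c)" by (simp add: Re_inverse cmod_power2)
  finally show ?thesis unfolding K_def c_def .
qed

lemma exp_cos_diff_mult_cos_le_on_period:
  fixes \<theta> \<phi> :: real
  assumes "\<theta> \<le> \<phi>" "\<phi> \<le> \<theta> + 2 * pi"
  shows "exp (cos \<phi> - cos \<theta>) * cos (sin \<phi> - sin \<theta> - \<theta>) \<le> cos \<theta>"
proof -
  define g where "g t = exp (cos t - cos \<theta>) * cos (sin t - sin \<theta> - \<theta>)" for t :: real
  define k where "k t = t + sin t" for t :: real
  have dg: "DERIV g t :> - exp (cos t - cos \<theta>) * sin (k t - k \<theta>)" for t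
  proof -
    have k_diff: "k t - k \<theta> = t + (sin t - sin \<theta> - \<theta>)" unfolding k_def by simp
    show ?thesis unfolding g_def k_diff sin_add
      by (auto intro!: derivative_eq_intros simp: algebra_simps)
  qed
  have k_mono: "k a \<le> k b" if "a \<le> b" for a b
  proof (rule DERIV_nonneg_imp_nondecreasing[of a b k])
    show "a \<le> b" by fact
    fix t
    have "DERIV k t :> 1 + cos t" unfolding k_def by (auto intro!: derivative_eq_intros)
    moreover have "0 \<le> 1 + cos t" using cos_ge_minus_one[of t] by linarith
    ultimately show "\<exists>y. DERIV k t :> y \<and> 0 \<le> y" by blast
  qed
  \<comment> \<open>g decreases until k has advanced by pi from k \<theta> and increases afterwards, returning to
    g \<theta> = cos \<theta> at \<theta> + 2 pi.\<close>
  show ?thesis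
  proof (cases "k \<phi> - k \<theta> \<le> pi")
    case True
    have "g \<phi> \<le> g \<theta>"
    proof (rule DERIV_nonpos_imp_nonincreasing[of \<theta> \<phi> g])
      show "\<theta> \<le> \<phi>" by fact
      fix t assume t: "\<theta> \<le> t" "t \<le> \<phi>"
      have "0 \<le> k t - k \<theta>" "k t - k \<theta> \<le> pi" using k_mono[OF t(1)] k_mono[OF t(2)] True by auto
      then have "0 \<le> sin (k t - k \<theta>)" by (simp add: sin_ge_zero)
      then have "- exp (cos t - cos \<theta>) * sin (k t - k \<theta>) \<le> 0" by simp
      with dg show "\<exists>y. DERIV g t :> y \<and> y \<le> 0" by blast
    qed
    then show ?thesis unfolding g_def by simp
  next
    case False
    have "g \<phi> \<le> g (\<theta> + 2 * pi)"
    proof (rule DERIV_nonneg_imp_nondecreasing[of \<phi> "\<theta> + 2 * pi" g])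
      show "\<phi> \<le> \<theta> + 2 * pi" by fact
      fix t assume t: "\<phi> \<le> t" "t \<le> \<theta> + 2 * pi"
      have "k (\<theta> + 2 * pi) = k \<theta> + 2 * pi" unfolding k_def by simp
      then have "pi \<le> k t - k \<theta>" "k t - k \<theta> \<le> 2 * pi"
        using k_mono[OF t(1)] k_mono[OF t(2)] False by auto
      then have "0 \<le> sin (k t - k \<theta> - pi)" by (intro sin_ge_zero) auto
      then have "sin (k t - k \<theta>) \<le> 0" by (simp add: sin_diff)
      then have "0 \<le> - exp (cos t - cos \<theta>) * sin (k t - k \<theta>)" by (simp add: mult_nonneg_nonpos)
      with dg show "\<exists>y. DERIV g t :> y \<and> 0 \<le> y" by blast
    qed
    then show ?thesis unfolding g_def by simp
  qed
qed

lemma exp_cos_diff_mult_cos_le: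
  fixes \<theta> \<phi> :: real
  shows "exp (cos \<phi> - cos \<theta>) * cos (sin \<phi> - sin \<theta> - \<theta>) \<le> cos \<theta>"
proof -
  define n where "n = \<lfloor>(\<phi> - \<theta>) / (2 * pi)\<rfloor>"
  define \<psi> where "\<psi> = \<phi> - 2 * pi * of_int n"
  have "of_int n \<le> (\<phi> - \<theta>) / (2 * pi)" "(\<phi> - \<theta>) / (2 * pi) < of_int n + 1"
    unfolding n_def by linarith+
  then have "\<theta> \<le> \<psi>" "\<psi> \<le> \<theta> + 2 * pi" unfolding \<psi>_def by (simp_all add: field_simps)
  moreover have "cos \<psi> = cos \<phi>" "sin \<psi> = sin \<phi>" unfolding \<psi>_def by (simp_all add: cos_diff sin_diff)
  ultimately show ?thesis using exp_cos_diff_mult_cos_le_on_period[of \<theta> \<psi>] by simp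
qed

text \<open>The half-plane bounded by the tangent line to exp(D) at its boundary point exp a, whose
  outward normal is a * exp a, contains exp(D): this is the convexity of exp(D).\<close>
lemma Re_cnj_mult_exp_diff_le:
  fixes a u :: complex
  assumes a: "norm a = 1" and u: "norm u < 1"
  shows "Re (cnj a * exp (u - a)) \<le> Re (cnj a)"
proof -
  define f where "f z = exp (cnj a * exp (z - a))" for z
  have "norm (f u) \<le> exp (Re (cnj a))"
  proof (rule maximum_modulus_frontier[where S = "ball 0 1" and f = f])
    show "f holomorphic_on interior (ball 0 1)" unfolding f_def by (intro holomorphic_intros)
    show "continuous_on (closure (ball 0 1)) f" unfolding f_def by (intro continuous_intros)
    fix z :: complex assume "z \<in> frontier (ball 0 1)"
    then have z: "norm z = 1" by simp
    define \<theta> \<phi> where "\<theta> = Arg a" and "\<phi> = Arg z"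
    have ae: "a = exp (\<i> * of_real \<theta>)" using Arg_eq[of a] a unfolding \<theta>_def by force
    have ze: "z = exp (\<i> * of_real \<phi>)" using Arg_eq[of z] z unfolding \<phi>_def by force
    have "Re (cnj a * exp (z - a)) = exp (cos \<phi> - cos \<theta>) * cos (sin \<phi> - sin \<theta> - \<theta>)"
      unfolding ae ze cos_diff[of "sin \<phi> - sin \<theta>" \<theta>] by (simp add: Re_exp Im_exp algebra_simps)
    also have "\<dots> \<le> cos \<theta>" by (rule exp_cos_diff_mult_cos_le)
    also have "cos \<theta> = Re (cnj a)" unfolding ae by (simp add: Re_exp)
    finally show "norm (f z) \<le> exp (Re (cnj a))" unfolding f_def by simp
  qed (use u in auto)
  then show ?thesis unfolding f_def by simp
qed

lemma cnj_mult_self_of_norm_1: "norm z = 1 \<Longrightarrow> cnj z * z = 1"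
  using complex_norm_square[of z] by (simp add: mult.commute)

lemma Re_mult_compose_has_real_derivative:
  fixes \<gamma> :: "real \<Rightarrow> complex" and g :: "complex \<Rightarrow> complex"
  assumes "(\<gamma> has_vector_derivative \<gamma>') (at t)" and "(g has_field_derivative g') (at (\<gamma> t))"
  shows "((\<lambda>s. Re (c * g (\<gamma> s))) has_real_derivative Re (c * (\<gamma>' * g'))) (at t)"
proof -
  have "((g \<circ> \<gamma>) has_vector_derivative \<gamma>' * g') (at t)"
    by (rule field_vector_diff_chain_at[OF assms])
  then have "((\<lambda>s. c * (g \<circ> \<gamma>) s) has_vector_derivative c * (\<gamma>' * g')) (at t)"
    by (rule has_vector_derivative_mult_right)
  then have "((\<lambda>s. Re (c * (g \<circ> \<gamma>) s)) has_real_derivative Re (c * (\<gamma>' * g'))) (at t)"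
    by (rule has_field_derivative_Re)
  then show ?thesis by (simp add: o_def)
qed

lemma Schwarz_Lemma_ball:
  fixes f :: "complex \<Rightarrow> complex"
  assumes holf: "f holomorphic_on ball 0 r" and f0: "f 0 = 0"
    and bounded: "\<And>z. norm z < r \<Longrightarrow> norm (f z) < 1" and \<xi>: "norm \<xi> < r"
  shows "norm (f \<xi>) \<le> norm \<xi> / r"
proof -
  have r: "0 < r" using \<xi> norm_ge_zero[of \<xi>] by linarith
  define h where "h \<zeta> = f (of_real r * \<zeta>)" for \<zeta>
  have "of_real r * \<zeta> \<in> ball 0 r" if "\<zeta> \<in> ball 0 1" for \<zeta> :: complex
  proof -
    have "r * norm \<zeta> < r * 1" using r that by (intro mult_strict_left_mono) auto
    then show ?thesis using r by (simp add: norm_mult)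
  qed
  then have "(\<lambda>\<zeta>::complex. of_real r * \<zeta>) ` ball 0 1 \<subseteq> ball 0 r" by blast
  then have "h holomorphic_on ball 0 1" unfolding h_def
    by (intro holomorphic_on_compose_gen[OF _ holf, unfolded o_def]) (auto intro: holomorphic_intros)
  moreover have "h 0 = 0" unfolding h_def using f0 by simp
  moreover have "norm (h \<zeta>) < 1" if "norm \<zeta> < 1" for \<zeta>
    unfolding h_def using that r by (intro bounded) (simp add: norm_mult)
  moreover have "norm (\<xi> / of_real r) < 1" using \<xi> r by (simp add: norm_divide)
  ultimately have "norm (h (\<xi> / of_real r)) \<le> norm (\<xi> / of_real r)"
    by (rule Schwarz_Lemma(1))
  then show ?thesis unfolding h_def using r by (simp add: norm_divide)
qed

lemma Jack_radial:
  fixes g :: "complex \<Rightarrow> complex"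
  assumes dg: "(g has_field_derivative g') (at z0)" and z0: "z0 \<noteq> 0" and gz0: "norm (g z0) = 1"
    and Schwarz: "\<And>z. norm z < norm z0 \<Longrightarrow> norm (g z) \<le> norm z / norm z0"
  shows "1 \<le> Re (cnj (g z0) * (z0 * g'))"
proof (rule ccontr)
  assume "\<not> 1 \<le> Re (cnj (g z0) * (z0 * g'))"
  define f where "f t = Re (cnj (g z0) * g (of_real t * z0)) - t" for t :: real
  have "((\<lambda>t::real. of_real t * z0) has_vector_derivative z0) (at 1)"
    by (auto intro!: derivative_eq_intros)
  then have "DERIV f 1 :> Re (cnj (g z0) * (z0 * g')) - 1"
    unfolding f_def using dg by (intro DERIV_diff Re_mult_compose_has_real_derivative) auto
  with \<open>\<not> 1 \<le> _\<close> obtain d where d: "0 < d" "\<And>h. 0 < h \<Longrightarrow> h < d \<Longrightarrow> f 1 < f (1 - h)"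
    using DERIV_neg_dec_left by (metis diff_less_0_iff_less not_le)
  define h where "h = min (d / 2) (1 / 2)"
  have h: "0 < h" "h < d" "h < 1" unfolding h_def using d by auto
  have "f 1 = 0" unfolding f_def using gz0 by (simp add: cnj_mult_self_of_norm_1)
  moreover have "f (1 - h) \<le> 0"
  proof -
    define z where "z = of_real (1 - h) * z0"
    have norm_z: "norm z = (1 - h) * norm z0" unfolding z_def norm_mult norm_of_real using h by simp
    then have "norm z < norm z0" using h z0 by simp
    have "Re (cnj (g z0) * g z) \<le> norm (g z)"
      using complex_Re_le_cmod[of "cnj (g z0) * g z"] gz0 by (simp add: norm_mult)
    also have "\<dots> \<le> 1 - h" using Schwarz[OF \<open>norm z < norm z0\<close>] z0 by (simp add: norm_z)
    finally show ?thesis unfolding f_def z_def by simp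
  qed
  ultimately show False using d h by force
qed

lemma Jack_tangential:
  fixes g :: "complex \<Rightarrow> complex"
  assumes dg: "(g has_field_derivative g') (at z0)" and gz0: "norm (g z0) = 1"
    and circle: "\<forall>\<^sub>F z in nhds z0. norm z = norm z0 \<longrightarrow> norm (g z) \<le> 1"
  shows "Im (cnj (g z0) * (z0 * g')) = 0"
proof -
  define \<gamma> where "\<gamma> s = z0 * exp (\<i> * of_real s)" for s :: real
  define f where "f s = Re (cnj (g z0) * g (\<gamma> s))" for s
  have "(\<gamma> has_vector_derivative z0 * \<i>) (at 0)"
  proof -
    have "((\<lambda>s::real. exp (\<i> * of_real s)) has_vector_derivative \<i> * exp (\<i> * of_real 0)) (at 0)"
      by (rule has_vector_derivative_real_field) (auto intro!: derivative_eq_intros)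
    then show ?thesis unfolding \<gamma>_def using has_vector_derivative_mult_right by fastforce
  qed
  moreover have "(g has_field_derivative g') (at (\<gamma> 0))" using dg by (simp add: \<gamma>_def)
  ultimately have "DERIV f 0 :> Re (cnj (g z0) * (z0 * \<i> * g'))"
    unfolding f_def by (rule Re_mult_compose_has_real_derivative)
  moreover obtain d where "0 < d" "\<forall>s. \<bar>0 - s\<bar> < d \<longrightarrow> f s \<le> f 0"
  proof -
    have "isCont \<gamma> 0" unfolding \<gamma>_def by (intro continuous_intros)
    then have "filterlim \<gamma> (nhds z0) (at 0)" by (simp add: isCont_def \<gamma>_def)
    from eventually_compose_filterlim[OF circle this]
    have "\<forall>\<^sub>F s in at 0. f s \<le> f 0"
    proof eventually_elim
      case (elim s)
      have "f s \<le> norm (cnj (g z0) * g (\<gamma> s))" unfolding f_def by (rule complex_Re_le_cmod)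
      also have "\<dots> \<le> 1" using elim gz0 by (simp add: \<gamma>_def norm_mult)
      also have "1 = f 0" unfolding f_def \<gamma>_def using gz0 by (simp add: cnj_mult_self_of_norm_1)
      finally show ?case .
    qed
    then obtain d where d: "0 < d" "\<forall>s. s \<noteq> 0 \<and> dist s 0 < d \<longrightarrow> f s \<le> f 0"
      unfolding eventually_at by blast
    have "\<forall>s. \<bar>0 - s\<bar> < d \<longrightarrow> f s \<le> f 0"
      using d(2) by (metis abs_minus_commute diff_0_right dist_real_def order_refl)
    with d(1) show ?thesis by (rule that)
  qed
  ultimately have "Re (cnj (g z0) * (z0 * \<i> * g')) = 0" by (rule DERIV_local_max)
  then show ?thesis by (simp add: algebra_simps)
qed

lemma Jack_lemma:
  fixes g :: "complex \<Rightarrow> complex"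
  assumes holg: "g holomorphic_on U" and U: "open U" "ball 0 r \<subseteq> U" and z0: "z0 \<in> U" "norm z0 = r"
    and g0: "g 0 = 0" and bounded: "\<And>z. norm z < r \<Longrightarrow> norm (g z) < 1" and gz0: "norm (g z0) = 1"
  obtains m :: real where "1 \<le> m" and "z0 * deriv g z0 = of_real m * g z0"
proof -
  have "z0 \<noteq> 0" using g0 gz0 by auto
  with z0 have "0 < r" by auto
  have dg: "(g has_field_derivative deriv g z0) (at z0)" using holg U(1) z0(1) by (rule holomorphic_derivI)
  have "norm (g z) \<le> norm z / norm z0" if "norm z < norm z0" for z
    using Schwarz_Lemma_ball[OF holomorphic_on_subset[OF holg U(2)] g0 bounded] that z0(2) by simp
  then have radial: "1 \<le> Re (cnj (g z0) * (z0 * deriv g z0))"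
    using dg \<open>z0 \<noteq> 0\<close> gz0 by (intro Jack_radial)
  have "norm (g z) \<le> 1" if "z \<in> U" "norm z = r" for z
  proof (rule Lim_norm_ubound)
    show "\<not> trivial_limit (at z within ball 0 r)"
      using \<open>0 < r\<close> that(2) by (simp add: trivial_limit_within islimpt_ball)
    have "isCont g z"
      using holomorphic_on_imp_continuous_on[OF holg] continuous_on_eq_continuous_at[OF U(1)] that(1)
      by blast
    then show "(g \<longlongrightarrow> g z) (at z within ball 0 r)" by (simp add: isCont_def Lim_at_imp_Lim_at_within)
    show "\<forall>\<^sub>F x in at z within ball 0 r. norm (g x) \<le> 1"
      unfolding eventually_at_filter using bounded by (intro always_eventually) (auto intro: less_imp_le)
  qed
  then have "\<forall>\<^sub>F z in nhds z0. norm z = norm z0 \<longrightarrow> norm (g z) \<le> 1"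
    using eventually_nhds_in_open[OF U(1) z0(1)] z0(2) by (auto elim: eventually_mono)
  then have tangential: "Im (cnj (g z0) * (z0 * deriv g z0)) = 0"
    using dg gz0 by (intro Jack_tangential)
  define M where "M = cnj (g z0) * (z0 * deriv g z0)"
  have "z0 * deriv g z0 = g z0 * M"
    unfolding M_def using cnj_mult_self_of_norm_1[OF gz0] by (simp add: algebra_simps)
  also have "M = of_real (Re M)" using tangential unfolding M_def by (simp add: complex_eq_iff)
  finally have "z0 * deriv g z0 = of_real (Re M) * g z0" by (simp only: mult.commute)
  with radial show thesis unfolding M_def by (rule that)
qed

lemma Ln_exp_of_norm_less_pi:
  fixes u :: complex
  assumes "norm u < pi"
  shows "Ln (exp u) = u"
  using abs_Im_le_cmod[of u] assms by (intro Ln_exp) auto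

lemma Re_exp_pos_of_norm_less:
  fixes u :: complex
  assumes "norm u < pi / 2"
  shows "0 < Re (exp u)"
proof -
  have "0 < cos (Im u)" using abs_Im_le_cmod[of u] assms by (intro cos_gt_zero_pi) auto
  then show ?thesis by (simp add: Re_exp)
qed

lemma open_exp_ball: "open (exp ` ball (0::complex) r)"
proof (rule open_mapping_thm[of exp UNIV])
  show "\<not> exp constant_on (UNIV :: complex set)"
  proof
    assume "exp constant_on (UNIV :: complex set)"
    then obtain c where "\<forall>z::complex. exp z = c" unfolding constant_on_def by blast
    then have "exp (1::complex) = exp 0" by simp
    then have "Re (exp (1::complex)) = Re (exp 0)" by (rule arg_cong)
    then show False by (simp add: Re_exp)
  qed
qed (simp_all add: holomorphic_on_exp connected_UNIV)

lemma frontier_exp_ball_subset: "frontier (exp ` ball (0::complex) r) \<subseteq> exp ` sphere 0 r"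
proof
  fix w :: complex assume w: "w \<in> frontier (exp ` ball 0 r)"
  have "closed (exp ` cball (0::complex) r)"
    by (intro compact_imp_closed compact_continuous_image continuous_intros) simp
  then have "closure (exp ` ball 0 r) \<subseteq> exp ` cball (0::complex) r" by (intro closure_minimal) auto
  then obtain u where u: "u \<in> cball 0 r" "w = exp u" using w unfolding frontier_def by auto
  moreover have "w \<notin> exp ` ball 0 r" using w open_exp_ball by (simp add: frontier_def interior_open)
  ultimately have "u \<in> sphere 0 r" by auto
  with u(2) show "w \<in> exp ` sphere 0 r" by blast
qed

lemma exp_mult_not_in_exp_ball:
  fixes w q :: complex and \<alpha> \<beta> m :: real
  assumes w: "norm w = 1" and \<alpha>: "\<alpha> \<ge> 0" and \<beta>: "\<beta> > 0" and m: "m \<ge> 1"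
    and q: "norm q < 1 / (\<beta> * exp 1 + \<alpha>)"
  shows "exp w * (1 + q + w * of_real m / (of_real \<beta> * exp w + of_real \<alpha>)) \<notin> exp ` ball 0 1"
proof
  define c where "c = of_real \<beta> * exp w + of_real \<alpha>"
  assume "exp w * (1 + q + w * of_real m / c) \<in> exp ` ball 0 1"
  then obtain u where u: "norm u < 1" "exp u = exp w * (1 + q + w * of_real m / c)"
    unfolding c_def by auto
  have "cnj w * exp (u - w) = cnj w + cnj w * q + of_real m * inverse c"
    using u(2) cnj_mult_self_of_norm_1[OF w] by (simp add: exp_diff field_simps)
  then have "Re (cnj w * exp (u - w)) = Re (cnj w) + Re (cnj w * q) + m * Re (inverse c)" by simp
  with Re_cnj_mult_exp_diff_le[OF w u(1)] have "Re (cnj w * q) + m * Re (inverse c) \<le> 0" by linarith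
  moreover have "- norm q \<le> Re (cnj w * q)"
    using abs_Re_le_cmod[of "cnj w * q"] w by (simp add: norm_mult)
  moreover have "1 / (\<beta> * exp 1 + \<alpha>) \<le> Re (inverse c)"
    unfolding c_def by (rule Re_inverse_exp_on_circle_ge[OF w \<alpha> \<beta>])
  moreover from this have "0 \<le> Re (inverse c)" using q norm_ge_zero[of q] by linarith
  then have "1 * Re (inverse c) \<le> m * Re (inverse c)" by (rule mult_right_mono[OF m])
  ultimately show False using q by linarith
qed

lemma least_norm_exit_point:
  fixes p :: "'a::euclidean_space \<Rightarrow> 'b::topological_space"
  assumes contp: "continuous_on (ball 0 R) p" and E: "open E" "p 0 \<in> E"
    and z1: "z1 \<in> ball 0 R" "p z1 \<notin> E"
  obtains z0 where "z0 \<in> ball 0 R" "p z0 \<in> frontier E" "\<And>z. norm z < norm z0 \<Longrightarrow> p z \<in> E"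
proof -
  define B where "B = cball 0 (norm z1) \<inter> p -` (- E)"
  have cball_sub: "cball 0 (norm z1) \<subseteq> ball 0 R" using z1 by auto
  have "closed B" unfolding B_def using E(1)
    by (intro continuous_closed_preimage continuous_on_subset[OF contp cball_sub]) auto
  then have "compact B" unfolding B_def by (simp add: compact_eq_bounded_closed bounded_Int)
  moreover have "z1 \<in> B" unfolding B_def using z1 by auto
  ultimately obtain z0 where z0: "z0 \<in> B" and least: "\<And>y. y \<in> B \<Longrightarrow> norm z0 \<le> norm y"
    using continuous_attains_inf[OF _ _ continuous_on_norm_id, of B] by auto
  have inside: "p z \<in> E" if "norm z < norm z0" for z
  proof (rule ccontr)
    assume "p z \<notin> E"
    with that z0 have "z \<in> B" unfolding B_def by auto
    with least that show False by fastforce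
  qed
  have "z0 \<in> cball 0 (norm z1)" "p z0 \<notin> E" using z0 unfolding B_def by auto
  then have "z0 \<in> ball 0 R" "norm z0 \<le> norm z1" "p z0 \<notin> E" using cball_sub by (blast, simp_all)
  moreover have "z0 \<noteq> 0" using \<open>p z0 \<notin> E\<close> E(2) by auto
  moreover have "p z0 \<in> closure E"
  proof -
    have closure_ball_z0: "closure (ball (0::'a) (norm z0)) = cball 0 (norm z0)"
      using \<open>z0 \<noteq> 0\<close> by simp
    moreover have "cball 0 (norm z0) \<subseteq> ball 0 R"
      using subset_cball[OF \<open>norm z0 \<le> norm z1\<close>] cball_sub by (rule order.trans)
    ultimately have "continuous_on (closure (ball 0 (norm z0))) p"
      using continuous_on_subset[OF contp] by simp
    moreover have "p ` ball 0 (norm z0) \<subseteq> closure E"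
    proof (intro image_subsetI)
      fix z :: 'a assume "z \<in> ball 0 (norm z0)"
      then have "norm z < norm z0" by simp
      then show "p z \<in> closure E" using inside closure_subset by blast
    qed
    ultimately have "p ` closure (ball 0 (norm z0)) \<subseteq> closure E"
      by (rule image_closure_subset[OF _ closed_closure])
    then show ?thesis using closure_ball_z0 by auto
  qed
  ultimately show thesis
    by (intro that[OF _ _ inside]) (simp_all add: frontier_def interior_open[OF E(1)])
qed

lemma Jack_lemma_exp_ball:
  fixes p :: "complex \<Rightarrow> complex"
  assumes holp: "p holomorphic_on ball 0 1" and p0: "p 0 = 1" and z0: "z0 \<in> ball 0 1"
    and w0: "norm w0 = 1" "p z0 = exp w0"
    and inside: "\<And>z. norm z < norm z0 \<Longrightarrow> p z \<in> exp ` ball 0 1"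
  obtains m :: real where "1 \<le> m" and "z0 * deriv p z0 = exp w0 * (w0 * of_real m)"
proof -
  define U where "U = ball 0 1 \<inter> p -` {w. 0 < Re w}"
  define g where "g z = Ln (p z)" for z
  have Re_exp_pos: "0 < Re (exp u)" if "norm u \<le> 1" for u :: complex
    using that pi_gt3 by (intro Re_exp_pos_of_norm_less) simp
  have Ln_exp: "Ln (exp u) = u" if "norm u \<le> 1" for u :: complex
    using that pi_gt3 by (intro Ln_exp_of_norm_less_pi) simp
  have "open U" unfolding U_def using open_halfspace_Re_gt[of 0]
    by (intro continuous_open_preimage holomorphic_on_imp_continuous_on[OF holp]) auto
  have "ball 0 (norm z0) \<subseteq> U"
  proof
    fix z :: complex assume "z \<in> ball 0 (norm z0)"
    then have "norm z < norm z0" by simp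
    with inside Re_exp_pos z0 show "z \<in> U" unfolding U_def by fastforce
  qed
  moreover have "z0 \<in> U" unfolding U_def using z0 w0 Re_exp_pos by simp
  moreover have "g holomorphic_on U" unfolding g_def U_def
    by (intro holomorphic_on_Ln' holomorphic_on_subset[OF holp]) (auto simp: complex_nonpos_Reals_iff)
  moreover have "g 0 = 0" unfolding g_def using p0 by simp
  moreover have "norm (g z) < 1" if "norm z < norm z0" for z
    using inside[OF that] Ln_exp unfolding g_def by fastforce
  moreover have "g z0 = w0" unfolding g_def using w0 Ln_exp by simp
  ultimately obtain m where m: "1 \<le> m" "z0 * deriv g z0 = of_real m * w0"
    using Jack_lemma[OF _ \<open>open U\<close>, of g "norm z0" z0] w0(1) by auto
  have "p z0 \<notin> \<real>\<^sub>\<le>\<^sub>0" using \<open>z0 \<in> U\<close> unfolding U_def by (auto simp: complex_nonpos_Reals_iff)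
  moreover have "(p has_field_derivative deriv p z0) (at z0)"
    using z0 by (intro holomorphic_derivI[OF holp]) auto
  ultimately have "(g has_field_derivative inverse (p z0) * deriv p z0) (at z0)"
    unfolding g_def by (rule DERIV_chain2[OF has_field_derivative_Ln])
  then have "deriv g z0 = deriv p z0 / p z0" by (simp add: DERIV_imp_deriv divide_inverse mult.commute)
  with m(2) have "z0 * deriv p z0 = p z0 * (of_real m * w0)"
    using w0(2) by (simp add: field_simps)
  then have "z0 * deriv p z0 = exp w0 * (w0 * of_real m)" using w0(2) by (simp add: mult_ac)
  with m(1) show thesis by (rule that)
qed

lemma image_ball_subset_exp_ball:
  fixes Q p :: "complex \<Rightarrow> complex" and \<alpha> \<beta> :: real
  assumes \<alpha>: "\<alpha> \<ge> 0" and \<beta>: "\<beta> > 0"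
    and Q: "\<And>z. z \<in> ball 0 1 \<Longrightarrow> norm (Q z - 1) < 1 / (\<beta> * exp 1 + \<alpha>)"
    and holp: "p holomorphic_on ball 0 1" and p0: "p 0 = 1"
    and F: "\<And>z. z \<in> ball 0 1 \<Longrightarrow>
      p z * Q z + z * deriv p z / (of_real \<beta> * p z + of_real \<alpha>) \<in> exp ` ball 0 1"
  shows "p ` ball 0 1 \<subseteq> exp ` ball 0 1"
proof (rule ccontr)
  assume not_subset: "\<not> ?thesis"
  have "p 0 \<in> exp ` ball 0 1" using p0 by (auto intro!: image_eqI[of _ _ 0])
  moreover obtain z1 where "z1 \<in> ball 0 1" "p z1 \<notin> exp ` ball 0 1" using not_subset by blast
  ultimately obtain z0 where z0: "z0 \<in> ball 0 1" "p z0 \<in> frontier (exp ` ball 0 1)"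
    and inside: "\<And>z. norm z < norm z0 \<Longrightarrow> p z \<in> exp ` ball 0 1"
    by (rule least_norm_exit_point[OF holomorphic_on_imp_continuous_on[OF holp] open_exp_ball]) auto
  then obtain w0 where w0: "norm w0 = 1" "p z0 = exp w0" using frontier_exp_ball_subset by fastforce
  obtain m where m: "1 \<le> m" "z0 * deriv p z0 = exp w0 * (w0 * of_real m)"
    by (rule Jack_lemma_exp_ball[OF holp p0 z0(1) w0 inside])
  have "p z0 * Q z0 + z0 * deriv p z0 / (of_real \<beta> * p z0 + of_real \<alpha>)
      = exp w0 * (1 + (Q z0 - 1) + w0 * of_real m / (of_real \<beta> * exp w0 + of_real \<alpha>))"
    unfolding m(2) w0(2) by (simp add: algebra_simps)
  then show False using F[OF z0(1)] exp_mult_not_in_exp_ball[OF w0(1) \<alpha> \<beta> m(1) Q[OF z0(1)]] by simp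
qed

lemma subordinate_exp_if_image_subset:
  assumes holp: "p holomorphic_on unit_disk" and p0: "p 0 = 1"
    and range: "p ` unit_disk \<subseteq> exp ` unit_disk"
  shows "subordinate p exp"
proof -
  have p_exp_Ln: "Ln (p z) \<in> unit_disk \<and> p z = exp (Ln (p z)) \<and> 0 < Re (p z)" if "z \<in> unit_disk" for z
  proof -
    have "p z \<in> exp ` ball 0 1" using range that unfolding unit_disk_def by blast
    then obtain u where "norm u < 1" "p z = exp u" by auto
    moreover from this have "Ln (p z) = u" "0 < Re (p z)"
      using pi_gt3 Ln_exp_of_norm_less_pi[of u] Re_exp_pos_of_norm_less[of u] by simp_all
    ultimately show ?thesis unfolding unit_disk_def by simp
  qed
  show ?thesis unfolding subordinate_def
  proof (intro exI[of _ "\<lambda>z. Ln (p z)"] conjI ballI)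
    have "p z \<notin> \<real>\<^sub>\<le>\<^sub>0" if "z \<in> unit_disk" for z
      using p_exp_Ln[OF that] by (auto simp: complex_nonpos_Reals_iff)
    then show "(\<lambda>z. Ln (p z)) holomorphic_on unit_disk" using holp by (rule holomorphic_on_Ln')
  qed (use p_exp_Ln p0 in auto)
qed

theorem mainTheorem17:
  fixes Q p :: "complex \<Rightarrow> complex" and \<alpha> \<beta> :: real
  assumes "Q \<in> H11"
    and "\<alpha> \<ge> 0" and "\<beta> \<ge> 0" and "\<beta> \<noteq> 0"
    and "\<forall>z\<in>unit_disk. cmod (Q z - 1) < 1 / (\<beta> * exp 1 + \<alpha>)"
    and "p holomorphic_on unit_disk" and "p 0 = 1"
    and "\<forall>z\<in>unit_disk. of_real \<beta> * p z + of_real \<alpha> \<noteq> 0"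
    and "subordinate (\<lambda>z. p z * Q z + z * deriv p z / (of_real \<beta> * p z + of_real \<alpha>)) exp"
  shows "subordinate p exp"
proof -
  have "\<beta> > 0" using assms(3,4) by simp
  have "p z * Q z + z * deriv p z / (of_real \<beta> * p z + of_real \<alpha>) \<in> exp ` unit_disk"
    if "z \<in> unit_disk" for z
    using assms(9) that unfolding subordinate_def by blast
  then have "p ` unit_disk \<subseteq> exp ` unit_disk"
    using image_ball_subset_exp_ball[OF assms(2) \<open>\<beta> > 0\<close>] assms(5-7) unfolding unit_disk_def by blast
  with assms(6,7) show ?thesis by (rule subordinate_exp_if_image_subset)
qed

end
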